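(* Let $n\ge1$, let $\mathcal X\subseteq\mathbb N^n$ be a finite Ferrers set, and let $\Pi:\mathcal X\to\mathbb R_{>0}$. Let $\tilde{\mathcal B}_{\mathcal X}$ be the set of functions $\Gamma:\mathcal X\to\mathbb R_{\ge0}$ that are componentwise non-increasing ($\Gamma(x)\ge\Gamma(x+e_i)$ whenever $x,x+e_i\in\mathcal X$) and satisfy $\sum_{x\in\mathcal X}\Pi(x)\Gamma(x)=1$. For each Ferrers subset $\mathcal A\subseteq\mathcal X$ define $\Gamma_{\mathcal A}(x)=\mathbf 1\{x\in\mathcal A\}/\sum_{y\in\mathcal A}\Pi(y)$. Then $\tilde{\mathcal B}_{\mathcal X}$ is the convex hull of $\{\Gamma_{\mathcal A}:\mathcal A\text{ a Ferrers subset of }\mathcal X\}$, and each such $\Gamma_{\mathcal A}$ is an extreme point of $\tilde{\mathcal B}_{\mathcal X}$.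
   Context: $e_i$ is the $i$-th unit vector of $\mathbb N^n$; $\le$ is componentwise. A set $\mathcal X\subseteq\mathbb N^n$ is a Ferrers set if $0\in\mathcal X$ and $x\in\mathcal X$, $y\in\mathbb N^n$, $y\le x$ imply $y\in\mathcal X$. *)

theory Defs
  imports "HOL-Analysis.Analysis" "HOL-Library.Function_Algebras"
begin

text \<open>Real-valued (more generally vector-valued) functions form a real vector space
  under pointwise operations; this lets us use the library notions
  convex hull and extreme_point_of for sets of functions.\<close>

instantiation "fun" :: (type, real_vector) real_vector
begin
definition scaleR_fun :: "real \<Rightarrow> ('a \<Rightarrow> 'b) \<Rightarrow> 'a \<Rightarrow> 'b"
  where "scaleR_fun c f = (\<lambda>x. c *\<^sub>R f x)"
instance
  by standard (auto simp: scaleR_fun_def fun_eq_iff scaleR_add_right scaleR_add_left)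
end

text \<open>Points of N^n are modelled as functions nat => nat vanishing outside {..<n}.\<close>
definition Nn :: "nat \<Rightarrow> (nat \<Rightarrow> nat) set" where
  "Nn n = {x. \<forall>i\<ge>n. x i = 0}"

definition unitv :: "nat \<Rightarrow> nat \<Rightarrow> nat" where
  "unitv i = (\<lambda>j. if j = i then 1 else 0)"

definition ferrers :: "nat \<Rightarrow> (nat \<Rightarrow> nat) set \<Rightarrow> bool" where
  "ferrers n X \<longleftrightarrow> X \<subseteq> Nn n \<and> 0 \<in> X \<and>
     (\<forall>x\<in>X. \<forall>y\<in>Nn n. y \<le> x \<longrightarrow> y \<in> X)"

definition Btilde :: "nat \<Rightarrow> (nat \<Rightarrow> nat) set \<Rightarrow> ((nat \<Rightarrow> nat) \<Rightarrow> real)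
    \<Rightarrow> (((nat \<Rightarrow> nat) \<Rightarrow> real) set)" where
  "Btilde n X Pw = {G. (\<forall>x. x \<notin> X \<longrightarrow> G x = 0) \<and> (\<forall>x\<in>X. 0 \<le> G x) \<and>
      (\<forall>x\<in>X. \<forall>i<n. x + unitv i \<in> X \<longrightarrow> G (x + unitv i) \<le> G x) \<and>
      (\<Sum>x\<in>X. Pw x * G x) = 1}"

definition GammaA :: "((nat \<Rightarrow> nat) \<Rightarrow> real) \<Rightarrow> (nat \<Rightarrow> nat) set \<Rightarrow> (nat \<Rightarrow> nat) \<Rightarrow> real" where
  "GammaA Pw A = (\<lambda>x. (if x \<in> A then 1 else 0) / (\<Sum>y\<in>A. Pw y))"

end

theory Submission
  imports Defs
begin

(* Every G in Btilde is a layer cake: with 0 < v_1 < ... < v_k its positive values,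
   G = sum_j (v_j - v_(j-1)) * 1{G >= v_j}, and since G is non-increasing each
   superlevel set {G >= v_j} is a Ferrers subset A_j of X.  Rescaling the indicators to
   GammaA A_j gives a convex combination, the weights summing to sum_x Pw x * G x = 1.
   For extremality: a function G in Btilde supported on a Ferrers set A is bounded by G 0
   on A, so 1 = sum_A Pw * G <= G 0 * sum_A Pw, with equality only for G = GammaA A.
   If GammaA A lies strictly between a and b, both are supported on A and the value at 0
   forces equality in both bounds. *)

lemma sum_fun_apply: "(\<Sum>i\<in>I. f i) x = (\<Sum>i\<in>I. f i x)"
  by (induction I rule: infinite_finite_induct) auto

lemma scaleR_fun_apply: "(c *\<^sub>R f) x = c * f x"
  by (simp add: scaleR_fun_def)

lemma sum_weighted_lincomb:
  "(\<Sum>x\<in>X. w x * (\<Sum>v\<in>S. a v *\<^sub>R F v) x) = (\<Sum>v\<in>S. a v * (\<Sum>x\<in>X. w x * F v x))"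
proof -
  have "(\<Sum>x\<in>X. w x * (\<Sum>v\<in>S. a v *\<^sub>R F v) x) = (\<Sum>x\<in>X. \<Sum>v\<in>S. a v * (w x * F v x))"
    by (simp add: sum_fun_apply scaleR_fun_apply sum_distrib_left mult.left_commute)
  also have "\<dots> = (\<Sum>v\<in>S. \<Sum>x\<in>X. a v * (w x * F v x))"
    by (rule sum.swap)
  finally show ?thesis by (simp add: sum_distrib_left)
qed

lemma ferrers_antitone:
  fixes G :: "(nat \<Rightarrow> nat) \<Rightarrow> 'b::order"
  assumes fX: "ferrers n X"
    and step: "\<forall>x\<in>X. \<forall>i<n. x + unitv i \<in> X \<longrightarrow> G (x + unitv i) \<le> G x"
    and "x \<in> X" "y \<le> x"
  shows "G x \<le> G y"
  using assms(3,4)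
proof (induction "\<Sum>j<n. x j" arbitrary: x rule: less_induct)
  case less
  have XN: "X \<subseteq> Nn n" and down: "\<forall>x\<in>X. \<forall>y\<in>Nn n. y \<le> x \<longrightarrow> y \<in> X"
    using fX by (auto simp: ferrers_def)
  show ?case
  proof (cases "x = y")
    case False
    then obtain i where "y i \<noteq> x i" by (metis ext)
    with le_funD[OF less.prems(2), of i] have i: "y i < x i" by simp
    have xN: "x \<in> Nn n" using less.prems(1) XN by auto
    have "\<not> n \<le> i" using xN i by (auto simp: Nn_def)
    then have "i < n" by simp
    define x' where "x' = x(i := x i - 1)"
    have x'X: "x' \<in> X"
      using down less.prems(1) xN by (auto simp: x'_def Nn_def le_fun_def)
    have x'_step: "x' + unitv i = x"
      using i by (auto simp: x'_def unitv_def fun_eq_iff)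
    have "(\<Sum>j<n. x j) = (\<Sum>j<n. x' j + unitv i j)"
      by (metis x'_step plus_fun_apply)
    also have "\<dots> = (\<Sum>j<n. x' j) + 1"
      using \<open>i < n\<close> by (simp add: sum.distrib unitv_def)
    finally have "(\<Sum>j<n. x' j) < (\<Sum>j<n. x j)" by simp
    moreover have "y \<le> x'"
      using less.prems(2) i by (auto simp: x'_def le_fun_def)
    ultimately have "G x' \<le> G y" using less.hyps x'X by blast
    moreover have "G x \<le> G x'"
      using step x'X \<open>i < n\<close> x'_step less.prems(1) by metis
    ultimately show ?thesis by simp
  qed simp
qed

lemma ferrers_superlevel_set:
  fixes G :: "(nat \<Rightarrow> nat) \<Rightarrow> 'b::order"
  assumes fX: "ferrers n X"
    and anti: "\<And>x y. x \<in> X \<Longrightarrow> y \<le> x \<Longrightarrow> G x \<le> G y"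
    and "v \<le> G 0"
  shows "ferrers n {x\<in>X. v \<le> G x}"
  unfolding ferrers_def
proof (intro conjI ballI impI)
  have XN: "X \<subseteq> Nn n" and X0: "0 \<in> X" and down: "\<forall>x\<in>X. \<forall>y\<in>Nn n. y \<le> x \<longrightarrow> y \<in> X"
    using fX unfolding ferrers_def by blast+
  show "{x\<in>X. v \<le> G x} \<subseteq> Nn n" using XN by blast
  show "0 \<in> {x\<in>X. v \<le> G x}" using X0 assms(3) by simp
  fix x y assume x: "x \<in> {x\<in>X. v \<le> G x}" and y: "y \<in> Nn n" "y \<le> x"
  then have "y \<in> X" using down by blast
  moreover have "v \<le> G y" using x order_trans[OF _ anti[OF _ y(2)]] by blast
  ultimately show "y \<in> {x\<in>X. v \<le> G x}" by simp
qed

definition level_gap :: "real set \<Rightarrow> real \<Rightarrow> real" where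
  "level_gap S v = v - Max (insert 0 {w\<in>S. w < v})"

lemma level_gap_nonneg:
  assumes "finite S" "S \<subseteq> {0<..}" "v \<in> S"
  shows "0 \<le> level_gap S v"
  using assms by (auto simp: level_gap_def)

lemma sum_level_gap:
  assumes fin: "finite S" and pos: "S \<subseteq> {0<..}" and "t \<in> S"
  shows "(\<Sum>v\<in>{v\<in>S. v \<le> t}. level_gap S v) = t"
  using assms(3)
proof (induction "card {v\<in>S. v < t}" arbitrary: t rule: less_induct)
  case less
  have below_fin: "finite {v\<in>S. v < t}" using fin by auto
  have split: "{v\<in>S. v \<le> t} = insert t {v\<in>S. v < t}" using less.prems by auto
  show ?case
  proof (cases "{v\<in>S. v < t} = {}")
    case True
    show ?thesis by (simp add: split True level_gap_def)
  next
    case False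
    define t' where "t' = Max {v\<in>S. v < t}"
    have t': "t' \<in> S" "t' < t" using Max_in[OF below_fin False] by (auto simp: t'_def)
    have gap: "level_gap S t = t - t'"
      using Max_insert[OF below_fin False] t' pos by (auto simp: level_gap_def t'_def)
    have below_eq: "{v\<in>S. v < t} = {v\<in>S. v \<le> t'}"
      using t' Max_ge[OF below_fin] by (force simp: t'_def)
    have "card {v\<in>S. v < t'} < card {v\<in>S. v < t}"
      using t' below_fin by (intro psubset_card_mono) auto
    then have "(\<Sum>v\<in>{v\<in>S. v \<le> t'}. level_gap S v) = t'"
      using less.hyps t'(1) by blast
    then show ?thesis
      using split below_fin gap below_eq t'(2) by simp
  qed
qed

lemma layer_cake:
  assumes "finite S" "S \<subseteq> {0<..}" "t \<in> insert 0 S"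
  shows "(\<Sum>v\<in>S. if v \<le> t then level_gap S v else 0) = t"
proof -
  have "(\<Sum>v\<in>S. if v \<le> t then level_gap S v else 0) = (\<Sum>v\<in>{v\<in>S. v \<le> t}. level_gap S v)"
    using assms(1) by (simp add: sum.inter_filter)
  also have "\<dots> = t"
  proof (cases "t \<in> S")
    case True
    then show ?thesis using sum_level_gap assms(1,2) by blast
  next
    case False
    then have "t = 0" using assms(3) by simp
    moreover have "{v\<in>S. v \<le> 0} = {}" using assms(2) by force
    ultimately show ?thesis by (simp only:) simp
  qed
  finally show ?thesis .
qed

lemma BtildeD:
  assumes "G \<in> Btilde n X Pw"
  shows "\<And>x. x \<notin> X \<Longrightarrow> G x = 0" and "\<And>x. 0 \<le> G x"
    and "\<forall>x\<in>X. \<forall>i<n. x + unitv i \<in> X \<longrightarrow> G (x + unitv i) \<le> G x"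
    and "(\<Sum>x\<in>X. Pw x * G x) = 1"
proof -
  show "0 \<le> G x" for x
    using assms by (cases "x \<in> X") (auto simp: Btilde_def)
qed (use assms in \<open>auto simp: Btilde_def\<close>)

lemma convex_Btilde: "convex (Btilde n X Pw)"
  unfolding convex_def
proof (intro ballI allI impI)
  fix G H :: "(nat \<Rightarrow> nat) \<Rightarrow> real" and u v :: real
  assume G: "G \<in> Btilde n X Pw" and H: "H \<in> Btilde n X Pw"
    and uv: "0 \<le> u" "0 \<le> v" "u + v = 1"
  have "(\<Sum>x\<in>X. Pw x * (u * G x + v * H x))
      = u * (\<Sum>x\<in>X. Pw x * G x) + v * (\<Sum>x\<in>X. Pw x * H x)"
    by (simp add: sum_distrib_left sum.distrib algebra_simps)
  then have "(\<Sum>x\<in>X. Pw x * (u * G x + v * H x)) = 1"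
    using BtildeD(4)[OF G] BtildeD(4)[OF H] uv by simp
  then show "u *\<^sub>R G + v *\<^sub>R H \<in> Btilde n X Pw"
    using G H uv unfolding Btilde_def
    by (auto simp: scaleR_fun_apply intro!: add_mono mult_left_mono)
qed

lemma sum_Pw_pos:
  assumes "finite A" "0 \<in> A" "\<forall>x\<in>A. Pw x > 0"
  shows "sum Pw A > (0::real)"
  using assms by (intro sum_pos) auto

lemma GammaA_in_Btilde:
  assumes "finite X" "ferrers n X" "\<forall>x\<in>X. Pw x > 0" "A \<subseteq> X" "ferrers n A"
  shows "GammaA Pw A \<in> Btilde n X Pw"
proof -
  have A0: "0 \<in> A" using assms(5) by (simp add: ferrers_def)
  have P: "sum Pw A > 0"
    using sum_Pw_pos[OF _ A0] assms(1,3,4) finite_subset by blast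
  have "x \<in> A" if "x + unitv i \<in> A" "x \<in> X" for x i
    using that assms(2,5) by (auto simp: ferrers_def le_fun_def)
  then have step: "GammaA Pw A (x + unitv i) \<le> GammaA Pw A x" if "x \<in> X" for x i
    using that P by (auto simp: GammaA_def)
  have "(\<Sum>x\<in>X. Pw x * GammaA Pw A x) = (\<Sum>x\<in>X. if x \<in> A then Pw x else 0) / sum Pw A"
    unfolding GammaA_def sum_divide_distrib by (rule sum.cong) auto
  also have "\<dots> = sum Pw A / sum Pw A"
    using sum.inter_restrict[OF assms(1), of Pw A] assms(4) by (simp add: Int_absorb1)
  also have "\<dots> = 1" using P by simp
  finally show ?thesis
    using assms(4) P step unfolding Btilde_def by (auto simp: GammaA_def)
qed

lemma Btilde_supported_value_at_0:
  assumes fX: "finite X" and feX: "ferrers n X" and pw: "\<forall>x\<in>X. Pw x > 0"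
    and G: "G \<in> Btilde n X Pw" and AX: "A \<subseteq> X" and A0: "0 \<in> A"
    and supp: "\<forall>x. x \<notin> A \<longrightarrow> G x = 0"
  shows "1 / sum Pw A \<le> G 0" and "G 0 \<le> 1 / sum Pw A \<Longrightarrow> G = GammaA Pw A"
proof -
  have finA: "finite A" using fX AX finite_subset by blast
  have P: "sum Pw A > 0" using sum_Pw_pos[OF finA A0] pw AX by blast
  have mass: "(\<Sum>x\<in>A. Pw x * G x) = 1"
    using sum.mono_neutral_left[OF fX AX, of "\<lambda>x. Pw x * G x"] supp BtildeD(4)[OF G] by auto
  have "(\<Sum>x\<in>A. Pw x * (G 0 - G x)) = sum Pw A * G 0 - (\<Sum>x\<in>A. Pw x * G x)"
    by (simp add: right_diff_distrib sum_subtractf sum_distrib_right)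
  then have defect: "(\<Sum>x\<in>A. Pw x * (G 0 - G x)) = sum Pw A * G 0 - 1"
    using mass by simp
  have terms_nonneg: "0 \<le> Pw x * (G 0 - G x)" if x: "x \<in> A" for x
  proof -
    have "G x \<le> G 0"
      using ferrers_antitone[OF feX BtildeD(3)[OF G]] x AX by (auto simp: le_fun_def)
    moreover have "0 < Pw x" using pw AX x by auto
    ultimately show ?thesis by simp
  qed
  then have "0 \<le> sum Pw A * G 0 - 1"
    unfolding defect[symmetric] by (rule sum_nonneg)
  then show "1 / sum Pw A \<le> G 0" using P by (simp add: field_simps)
  assume "G 0 \<le> 1 / sum Pw A"
  then have "sum Pw A * G 0 - 1 \<le> 0" using P by (simp add: field_simps)
  then have "(\<Sum>x\<in>A. Pw x * (G 0 - G x)) = 0"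
    using defect \<open>0 \<le> sum Pw A * G 0 - 1\<close> by linarith
  then have zero_terms: "\<forall>x\<in>A. Pw x * (G 0 - G x) = 0"
    using sum_nonneg_eq_0_iff[OF finA, of "\<lambda>x. Pw x * (G 0 - G x)"] terms_nonneg by blast
  have const: "\<forall>x\<in>A. G x = G 0"
  proof
    fix x assume x: "x \<in> A"
    then have "Pw x \<noteq> 0" using pw AX by force
    moreover have "Pw x * (G 0 - G x) = 0" using zero_terms x by blast
    ultimately show "G x = G 0" by simp
  qed
  then have "sum Pw A * G 0 = 1"
    using defect \<open>(\<Sum>x\<in>A. Pw x * (G 0 - G x)) = 0\<close> by linarith
  then show "G = GammaA Pw A"
    using const supp P by (auto simp: GammaA_def fun_eq_iff field_simps)
qed

lemma GammaA_extreme_point: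
  assumes fX: "finite X" and feX: "ferrers n X" and pw: "\<forall>x\<in>X. Pw x > 0"
    and AX: "A \<subseteq> X" and feA: "ferrers n A"
  shows "GammaA Pw A extreme_point_of Btilde n X Pw"
  unfolding extreme_point_of_def
proof (intro conjI ballI notI)
  show "GammaA Pw A \<in> Btilde n X Pw" by (rule GammaA_in_Btilde[OF assms])
  fix a b assume a: "a \<in> Btilde n X Pw" and b: "b \<in> Btilde n X Pw"
    and "GammaA Pw A \<in> open_segment a b"
  then obtain u where ab: "a \<noteq> b" and u: "0 < u" "u < 1"
    and "GammaA Pw A = (1 - u) *\<^sub>R a + u *\<^sub>R b"
    by (auto simp: in_segment)
  then have mid: "GammaA Pw A x = (1 - u) * a x + u * b x" for x
    by (simp add: scaleR_fun_apply)
  have A0: "0 \<in> A" using feA by (simp add: ferrers_def)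
  have "a x = 0 \<and> b x = 0" if "x \<notin> A" for x
  proof -
    have "(1 - u) * a x + u * b x = 0" using mid[of x] that by (simp add: GammaA_def)
    moreover have "0 \<le> (1 - u) * a x" "0 \<le> u * b x"
      using BtildeD(2)[OF a] BtildeD(2)[OF b] u by simp_all
    ultimately have "(1 - u) * a x = 0" "u * b x = 0" by linarith+
    then show ?thesis using u by simp
  qed
  then have supp_a: "\<forall>x. x \<notin> A \<longrightarrow> a x = 0" and supp_b: "\<forall>x. x \<notin> A \<longrightarrow> b x = 0"
    by auto
  define c where "c = 1 / sum Pw A"
  have ca: "c \<le> a 0" and cb: "c \<le> b 0"
    using Btilde_supported_value_at_0(1)[OF fX feX pw a AX A0 supp_a]
      Btilde_supported_value_at_0(1)[OF fX feX pw b AX A0 supp_b] by (simp_all add: c_def)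
  have "(1 - u) * a 0 + u * b 0 = c" using mid[of 0] A0 by (simp add: GammaA_def c_def)
  then have "(1 - u) * (a 0 - c) + u * (b 0 - c) = 0" by (simp add: algebra_simps)
  moreover have "0 \<le> (1 - u) * (a 0 - c)" "0 \<le> u * (b 0 - c)" using ca cb u by simp_all
  ultimately have "(1 - u) * (a 0 - c) = 0" "u * (b 0 - c) = 0" by linarith+
  then have "a 0 = c \<and> b 0 = c" using u by simp
  then have "a = GammaA Pw A" "b = GammaA Pw A"
    using Btilde_supported_value_at_0(2)[OF fX feX pw a AX A0 supp_a]
      Btilde_supported_value_at_0(2)[OF fX feX pw b AX A0 supp_b] by (simp_all add: c_def)
  then show False using ab by simp
qed

lemma Btilde_layer_cake:
  assumes fX: "finite X" and feX: "ferrers n X" and pw: "\<forall>x\<in>X. Pw x > 0"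
    and G: "G \<in> Btilde n X Pw"
  obtains S :: "real set" and a :: "real \<Rightarrow> real" and L
  where "finite S" "\<forall>v\<in>S. 0 \<le> a v \<and> L v \<subseteq> X \<and> ferrers n (L v)"
    and "G = (\<Sum>v\<in>S. a v *\<^sub>R GammaA Pw (L v))"
proof -
  define S where "S = G ` X \<inter> {0<..}"
  define L where "L v = {x\<in>X. v \<le> G x}" for v
  define a where "a v = level_gap S v * sum Pw (L v)" for v
  have finS: "finite S" and posS: "S \<subseteq> {0<..}" using fX by (auto simp: S_def)
  have anti: "\<And>x y. x \<in> X \<Longrightarrow> y \<le> x \<Longrightarrow> G x \<le> G y"
    using ferrers_antitone[OF feX BtildeD(3)[OF G]] by blast
  have ferrers_L: "ferrers n (L v)" if v: "v \<in> S" for v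
  proof -
    obtain x where "x \<in> X" "v = G x" using v by (auto simp: S_def)
    then have "v \<le> G 0" using anti by (simp add: le_fun_def)
    then show ?thesis unfolding L_def by (intro ferrers_superlevel_set[OF feX anti])
  qed
  have P: "sum Pw (L v) > 0" if v: "v \<in> S" for v
  proof (rule sum_Pw_pos)
    show "finite (L v)" using fX by (simp add: L_def)
    show "0 \<in> L v" using ferrers_L[OF v] by (simp add: ferrers_def)
    show "\<forall>x\<in>L v. 0 < Pw x" using pw by (simp add: L_def)
  qed
  have "0 \<le> a v" if v: "v \<in> S" for v
    using level_gap_nonneg[OF finS posS v] P[OF v] by (simp add: a_def)
  then have weights: "\<forall>v\<in>S. 0 \<le> a v \<and> L v \<subseteq> X \<and> ferrers n (L v)"
    using ferrers_L by (simp add: L_def)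
  have "G = (\<Sum>v\<in>S. a v *\<^sub>R GammaA Pw (L v))"
  proof (rule ext)
    fix x
    have "a v * GammaA Pw (L v) x = (if x \<in> L v then level_gap S v else 0)" if "v \<in> S" for v
      using P[OF that] by (simp add: a_def GammaA_def)
    then have "(\<Sum>v\<in>S. a v *\<^sub>R GammaA Pw (L v)) x
        = (\<Sum>v\<in>S. (if x \<in> L v then level_gap S v else 0))"
      by (simp add: sum_fun_apply scaleR_fun_apply)
    also have "\<dots> = G x"
    proof (cases "x \<in> X")
      case True
      have "G x \<in> insert 0 S" using True BtildeD(2)[OF G, of x] by (auto simp: S_def)
      with True show ?thesis using layer_cake[OF finS posS] by (simp add: L_def)
    qed (simp add: L_def BtildeD(1)[OF G])
    finally show "G x = (\<Sum>v\<in>S. a v *\<^sub>R GammaA Pw (L v)) x" by simp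
  qed
  with finS weights show thesis by (rule that)
qed

lemma Btilde_subset_convex_hull:
  assumes fX: "finite X" and feX: "ferrers n X" and pw: "\<forall>x\<in>X. Pw x > 0"
    and G: "G \<in> Btilde n X Pw"
  shows "G \<in> convex hull {GammaA Pw A | A. A \<subseteq> X \<and> ferrers n A}"
proof -
  obtain S :: "real set" and a L where finS: "finite S"
    and L: "\<forall>v\<in>S. 0 \<le> a v \<and> L v \<subseteq> X \<and> ferrers n (L v)"
    and G_eq: "G = (\<Sum>v\<in>S. a v *\<^sub>R GammaA Pw (L v))"
    using Btilde_layer_cake[OF assms] by blast
  have "1 = (\<Sum>x\<in>X. Pw x * (\<Sum>v\<in>S. a v *\<^sub>R GammaA Pw (L v)) x)"
    using BtildeD(4)[OF G] G_eq by simp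
  also have "\<dots> = (\<Sum>v\<in>S. a v * (\<Sum>x\<in>X. Pw x * GammaA Pw (L v) x))"
    by (rule sum_weighted_lincomb)
  also have "\<dots> = sum a S"
    using L BtildeD(4)[OF GammaA_in_Btilde[OF fX feX pw]] by (intro sum.cong) auto
  finally have "sum a S = 1" ..
  moreover have "GammaA Pw (L v) \<in> convex hull {GammaA Pw A | A. A \<subseteq> X \<and> ferrers n A}"
    if "v \<in> S" for v
    using L that by (intro hull_inc) blast
  ultimately show ?thesis
    unfolding G_eq using L by (intro convex_sum[OF finS convex_convex_hull]) auto
qed

theorem mainTheorem9:
  fixes n :: nat and X :: "(nat \<Rightarrow> nat) set" and Pw :: "(nat \<Rightarrow> nat) \<Rightarrow> real"
  assumes "n \<ge> 1"
    and "finite X" and "ferrers n X"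
    and "\<forall>x\<in>X. Pw x > 0"
  shows "Btilde n X Pw = convex hull {GammaA Pw A | A. A \<subseteq> X \<and> ferrers n A}
    \<and> (\<forall>A. A \<subseteq> X \<and> ferrers n A \<longrightarrow> GammaA Pw A extreme_point_of Btilde n X Pw)"
proof (intro conjI allI impI equalityI)
  show "Btilde n X Pw \<subseteq> convex hull {GammaA Pw A | A. A \<subseteq> X \<and> ferrers n A}"
    using Btilde_subset_convex_hull assms(2-4) by blast
  show "convex hull {GammaA Pw A | A. A \<subseteq> X \<and> ferrers n A} \<subseteq> Btilde n X Pw"
    using GammaA_in_Btilde assms(2-4) by (intro hull_minimal convex_Btilde) auto
  show "GammaA Pw A extreme_point_of Btilde n X Pw" if "A \<subseteq> X \<and> ferrers n A" for A
    using GammaA_extreme_point assms(2-4) that by blast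
qed

end
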